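(* Every nilpotent right loop is solvable.
   Context: A right loop is a set $S$ with binary operation $\circ$ and two-sided identity $1$ such that each equation $X\circ a=b$ has a unique solution. A congruence on $S$ is an equivalence relation which is a right subloop of $S\times S$ (componentwise); an invariant right subloop is the class $T$ of $1$ under a congruence, and $S/T=\{T\circ x\}$ with $(T\circ x)\circ(T\circ y)=T\circ(x\circ y)$. Centralizing: for congruences $\beta,\gamma$ on $S$, $\gamma$ centralizes $\beta$ if there is a congruence $(\gamma|\beta)$ on the right loop $\beta\subseteq S\times S$ such that: (i) $(x,y)(\gamma|\beta)(u,v)\Rightarrow x\gamma u$; (ii) for each $(x,y)\in\beta$ the map $(u,v)\mapsto u$ from the $(\gamma|\beta)$-class of $(x,y)$ to the $\gamma$-class of $x$ is a bijection; (iii) $(x,y)\in\gamma\Rightarrow (x,x)(\gamma|\beta)(y,y)$; (iv) $(x,y)(\gamma|\beta)(u,v)\Rightarrow(y,x)(\gamma|\beta)(v,u)$; (v) $(x,y)(\gamma|\beta)(u,v)$ and $(y,z)(\gamma|\beta)(v,w)$ imply $(x,z)(\gamma|\beta)(u,w)$. A congruence centralized by $S\times S$ is central; there is a unique maximal central congruence $\zeta(S)$, and the center $\mathcal Z(S)$ is the $\zeta(S)$-class of $1$ (it is an abelian group under $\circ$). $S$ is nilpotent if the series $\mathcal Z_0=\{1\}$, $\mathcal Z_1=\mathcal Z(S)$, $\mathcal Z_{i+1}/\mathcal Z_i=\mathcal Z(S/\mathcal Z_i)$ reaches $\mathcal Z_n=S$ for some $n$. $S^{(1)}$ is the smallest invariant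 right subloop $N$ with $S/N$ an abelian group; $S^{(n)}=(S^{(n-1)})^{(1)}$; $S$ is solvable if $S^{(n)}=\{1\}$ for some $n$. *)

theory Defs
  imports "HOL-Algebra.Group"
begin

definition rl_right_loop :: "'a set \<Rightarrow> ('a \<Rightarrow> 'a \<Rightarrow> 'a) \<Rightarrow> 'a \<Rightarrow> bool" where
  "rl_right_loop S op e \<longleftrightarrow>
     e \<in> S \<and> (\<forall>x\<in>S. \<forall>y\<in>S. op x y \<in> S) \<and>
     (\<forall>x\<in>S. op e x = x \<and> op x e = x) \<and>
     (\<forall>a\<in>S. \<forall>b\<in>S. \<exists>!x. x \<in> S \<and> op x a = b)"

definition rl_pop :: "('a \<Rightarrow> 'a \<Rightarrow> 'a) \<Rightarrow> ('a \<times> 'a) \<Rightarrow> ('a \<times> 'a) \<Rightarrow> ('a \<times> 'a)" where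
  "rl_pop op p q = (op (fst p) (fst q), op (snd p) (snd q))"

definition rl_congruence :: "'a set \<Rightarrow> ('a \<Rightarrow> 'a \<Rightarrow> 'a) \<Rightarrow> 'a \<Rightarrow> 'a rel \<Rightarrow> bool" where
  "rl_congruence S op e R \<longleftrightarrow>
     equiv S R \<and> R \<subseteq> S \<times> S \<and> rl_right_loop R (rl_pop op) (e, e)"

definition rl_centralizes :: "'a set \<Rightarrow> ('a \<Rightarrow> 'a \<Rightarrow> 'a) \<Rightarrow> 'a \<Rightarrow> 'a rel \<Rightarrow> 'a rel \<Rightarrow> bool" where
  "rl_centralizes S op e \<gamma> \<beta> \<longleftrightarrow>
     rl_congruence S op e \<beta> \<and> rl_congruence S op e \<gamma> \<and>
     (\<exists>C :: ('a \<times> 'a) rel.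
        rl_congruence \<beta> (rl_pop op) (e, e) C \<and>
        (\<forall>x y u v. ((x, y), (u, v)) \<in> C \<longrightarrow> (x, u) \<in> \<gamma>) \<and>
        (\<forall>x y. (x, y) \<in> \<beta> \<longrightarrow> bij_betw fst (C `` {(x, y)}) (\<gamma> `` {x})) \<and>
        (\<forall>x y. (x, y) \<in> \<gamma> \<longrightarrow> ((x, x), (y, y)) \<in> C) \<and>
        (\<forall>x y u v. ((x, y), (u, v)) \<in> C \<longrightarrow> ((y, x), (v, u)) \<in> C) \<and>
        (\<forall>x y z u v w. ((x, y), (u, v)) \<in> C \<and> ((y, z), (v, w)) \<in> C
            \<longrightarrow> ((x, z), (u, w)) \<in> C))"

definition rl_central :: "'a set \<Rightarrow> ('a \<Rightarrow> 'a \<Rightarrow> 'a) \<Rightarrow> 'a \<Rightarrow> 'a rel \<Rightarrow> bool" where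
  "rl_central S op e \<beta> \<longleftrightarrow> rl_centralizes S op e (S \<times> S) \<beta>"

definition rl_zeta :: "'a set \<Rightarrow> ('a \<Rightarrow> 'a \<Rightarrow> 'a) \<Rightarrow> 'a \<Rightarrow> 'a rel" where
  "rl_zeta S op e = (THE \<beta>. rl_central S op e \<beta> \<and> (\<forall>\<beta>'. rl_central S op e \<beta>' \<longrightarrow> \<beta>' \<subseteq> \<beta>))"

definition rl_center :: "'a set \<Rightarrow> ('a \<Rightarrow> 'a \<Rightarrow> 'a) \<Rightarrow> 'a \<Rightarrow> 'a set" where
  "rl_center S op e = rl_zeta S op e `` {e}"

definition rl_invariant :: "'a set \<Rightarrow> ('a \<Rightarrow> 'a \<Rightarrow> 'a) \<Rightarrow> 'a \<Rightarrow> 'a set \<Rightarrow> bool" where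
  "rl_invariant S op e T \<longleftrightarrow> (\<exists>R. rl_congruence S op e R \<and> T = R `` {e})"

definition rl_coset :: "('a \<Rightarrow> 'a \<Rightarrow> 'a) \<Rightarrow> 'a set \<Rightarrow> 'a \<Rightarrow> 'a set" where
  "rl_coset op T x = (\<lambda>t. op t x) ` T"

text \<open>To keep the quotient S/T = {T o x} inside the same type, each coset T o x
is represented by a chosen representative element of S lying in it;
the quotient operation is (T o x)(T o y) = T o (x o y).\<close>
definition rl_qrep :: "'a set \<Rightarrow> ('a \<Rightarrow> 'a \<Rightarrow> 'a) \<Rightarrow> 'a set \<Rightarrow> 'a \<Rightarrow> 'a" where
  "rl_qrep S op T x = (SOME y. y \<in> S \<and> rl_coset op T y = rl_coset op T x)"

definition rl_qcarrier :: "'a set \<Rightarrow> ('a \<Rightarrow> 'a \<Rightarrow> 'a) \<Rightarrow> 'a set \<Rightarrow> 'a set" where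
  "rl_qcarrier S op T = rl_qrep S op T ` S"

definition rl_qop :: "'a set \<Rightarrow> ('a \<Rightarrow> 'a \<Rightarrow> 'a) \<Rightarrow> 'a set \<Rightarrow> 'a \<Rightarrow> 'a \<Rightarrow> 'a" where
  "rl_qop S op T a b = rl_qrep S op T (op a b)"

text \<open>Z_0 = {1}; Z_{i+1} is the preimage in S of Z(S/Z_i).\<close>
fun rl_upper_center :: "'a set \<Rightarrow> ('a \<Rightarrow> 'a \<Rightarrow> 'a) \<Rightarrow> 'a \<Rightarrow> nat \<Rightarrow> 'a set" where
  "rl_upper_center S op e 0 = {e}"
| "rl_upper_center S op e (Suc i) =
     (let T = rl_upper_center S op e i in
      {x \<in> S. rl_qrep S op T x \<in>
              rl_center (rl_qcarrier S op T) (rl_qop S op T) (rl_qrep S op T e)})"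

definition rl_nilpotent :: "'a set \<Rightarrow> ('a \<Rightarrow> 'a \<Rightarrow> 'a) \<Rightarrow> 'a \<Rightarrow> bool" where
  "rl_nilpotent S op e \<longleftrightarrow> (\<exists>n. rl_upper_center S op e n = S)"

definition rl_quotient_abelian :: "'a set \<Rightarrow> ('a \<Rightarrow> 'a \<Rightarrow> 'a) \<Rightarrow> 'a \<Rightarrow> 'a set \<Rightarrow> bool" where
  "rl_quotient_abelian S op e N \<longleftrightarrow>
     comm_group \<lparr>carrier = rl_qcarrier S op N, mult = rl_qop S op N, one = rl_qrep S op N e\<rparr>"

definition rl_derived :: "'a set \<Rightarrow> ('a \<Rightarrow> 'a \<Rightarrow> 'a) \<Rightarrow> 'a \<Rightarrow> 'a set" where
  "rl_derived S op e = (THE N. rl_invariant S op e N \<and> rl_quotient_abelian S op e N \<and>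
       (\<forall>N'. rl_invariant S op e N' \<and> rl_quotient_abelian S op e N' \<longrightarrow> N \<subseteq> N'))"

fun rl_derived_series :: "'a set \<Rightarrow> ('a \<Rightarrow> 'a \<Rightarrow> 'a) \<Rightarrow> 'a \<Rightarrow> nat \<Rightarrow> 'a set" where
  "rl_derived_series S op e 0 = S"
| "rl_derived_series S op e (Suc n) = rl_derived (rl_derived_series S op e n) op e"

definition rl_solvable :: "'a set \<Rightarrow> ('a \<Rightarrow> 'a \<Rightarrow> 'a) \<Rightarrow> 'a \<Rightarrow> bool" where
  "rl_solvable S op e \<longleftrightarrow> (\<exists>n. rl_derived_series S op e n = {e})"

end

theory Submission
  imports Defs
begin

(* The proof makes the abstract notions of the definitions explicit; the file follows
   the steps below, one section each, and ends with the theorem.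
   (1) The maximal central congruence zeta(S) is "x ~ z o x for z in Z", where Z is the
       set of elements that commute and associate with everything; hence the centre
       of S is exactly Z.
   (2) Every quotient S/T by an invariant right subloop is again a right loop, and the
       representative map is a surjective homomorphism whose kernel relation is the
       congruence defining T.  Consequently every term Z_i of the upper central series
       is the identity class of a congruence R_i, and every x in Z_(i+1) commutes and
       associates with everything modulo R_i, its image in S/Z_i being central.
   (3) S/N is an abelian group iff S is commutative and associative modulo the congruence
       of N.  Such congruences are closed under intersection, so S^(1) exists and lies in
       every such N; moreover restricting a congruence to a right subloop gives one.
   (4) Hence a right subloop A of Z_(m+1) has abelian quotient modulo R_m restricted
       to A, so A^(1) lies in Z_m.  If Z_n = S, induction gives S^(k) inside Z_(n-k),
       and finally S^(n) = {1}. *)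

lemma rl_right_loopD:
  assumes "rl_right_loop S op e"
  shows "e \<in> S" "\<And>x y. x \<in> S \<Longrightarrow> y \<in> S \<Longrightarrow> op x y \<in> S"
    "\<And>x. x \<in> S \<Longrightarrow> op e x = x" "\<And>x. x \<in> S \<Longrightarrow> op x e = x"
    "\<And>a b. a \<in> S \<Longrightarrow> b \<in> S \<Longrightarrow> \<exists>!x. x \<in> S \<and> op x a = b"
  using assms unfolding rl_right_loop_def by auto

text \<open>Uniqueness of solutions of X o a = b is right cancellation.\<close>
lemma rl_right_cancel:
  assumes L: "rl_right_loop S op e" and "x \<in> S" "y \<in> S" "a \<in> S" and "op x a = op y a"
  shows "x = y"
proof -
  have "op x a \<in> S" using rl_right_loopD(2)[OF L] assms by auto
  then have "\<exists>!z. z \<in> S \<and> op z a = op x a" using rl_right_loopD(5)[OF L] assms by auto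
  then show ?thesis using assms by auto
qed

lemma rl_right_div:
  assumes "rl_right_loop S op e" "a \<in> S" "b \<in> S"
  obtains x where "x \<in> S" "op x a = b"
  using rl_right_loopD(5)[OF assms] by auto

section \<open>Congruences\<close>

lemma rl_congruenceI:
  assumes L: "rl_right_loop S op e" and eq: "equiv S R" and eR: "(e, e) \<in> R"
    and R_mult: "\<And>a b c d. (a, b) \<in> R \<Longrightarrow> (c, d) \<in> R \<Longrightarrow> (op a c, op b d) \<in> R"
    and R_div: "\<And>a b c d x y. (a, b) \<in> R \<Longrightarrow> (c, d) \<in> R \<Longrightarrow> x \<in> S \<Longrightarrow> y \<in> S \<Longrightarrow>
              op x a = c \<Longrightarrow> op y b = d \<Longrightarrow> (x, y) \<in> R"
  shows "rl_congruence S op e R"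
proof -
  have RS: "R \<subseteq> S \<times> S" using eq by (auto simp: equiv_def refl_on_def)
  have "rl_right_loop R (rl_pop op) (e, e)"
    unfolding rl_right_loop_def
  proof (intro conjI ballI)
    fix p q assume "p \<in> R" "q \<in> R"
    then show "rl_pop op p q \<in> R" using R_mult by (cases p, cases q) (auto simp: rl_pop_def)
  next
    fix p assume "p \<in> R"
    then show "rl_pop op (e, e) p = p" "rl_pop op p (e, e) = p"
      using RS rl_right_loopD(3,4)[OF L] by (cases p; auto simp: rl_pop_def)+
  next
    fix p q assume p: "p \<in> R" and q: "q \<in> R"
    obtain a b c d where pq: "p = (a, b)" "q = (c, d)" by (cases p, cases q)
    have S4: "a \<in> S" "b \<in> S" "c \<in> S" "d \<in> S" using RS p q pq by auto
    obtain x where x: "x \<in> S" "op x a = c" using rl_right_div[OF L S4(1) S4(3)] .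
    obtain y where y: "y \<in> S" "op y b = d" using rl_right_div[OF L S4(2) S4(4)] .
    show "\<exists>!z. z \<in> R \<and> rl_pop op z p = q"
    proof (rule ex1I[of _ "(x, y)"])
      show "(x, y) \<in> R \<and> rl_pop op (x, y) p = q"
        using R_div[of a b c d x y] p q pq x y by (simp add: rl_pop_def)
    next
      fix z assume z: "z \<in> R \<and> rl_pop op z p = q"
      obtain u v where zuv: "z = (u, v)" by (cases z)
      have "u \<in> S" "v \<in> S" "op u a = c" "op v b = d"
        using z zuv RS pq by (auto simp: rl_pop_def)
      then show "z = (x, y)"
        using rl_right_cancel[OF L _ x(1) S4(1)] rl_right_cancel[OF L _ y(1) S4(2)] x y zuv by metis
    qed
  qed (use eR in auto)
  with eq RS show ?thesis unfolding rl_congruence_def by blast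
qed

lemma rl_congruenceD:
  assumes "rl_congruence S op e R"
  shows "equiv S R" "R \<subseteq> S \<times> S" "rl_right_loop R (rl_pop op) (e, e)"
  using assms unfolding rl_congruence_def by auto

lemma rl_cong_refl:
  assumes "rl_congruence S op e R" "x \<in> S" shows "(x, x) \<in> R"
  using rl_congruenceD(1)[OF assms(1)] assms(2) by (simp add: equiv_def refl_on_def)

lemma rl_cong_sym:
  assumes "rl_congruence S op e R" "(x, y) \<in> R" shows "(y, x) \<in> R"
  using rl_congruenceD(1)[OF assms(1)] assms(2) unfolding equiv_def by (meson symD)

lemma rl_cong_trans:
  assumes "rl_congruence S op e R" "(x, y) \<in> R" "(y, z) \<in> R" shows "(x, z) \<in> R"
  using rl_congruenceD(1)[OF assms(1)] assms(2,3) unfolding equiv_def by (meson transD)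

lemma rl_cong_carrier:
  assumes "rl_congruence S op e R" "(x, y) \<in> R" shows "x \<in> S" "y \<in> S"
  using rl_congruenceD(2)[OF assms(1)] assms(2) by auto

lemma rl_cong_mult:
  assumes "rl_congruence S op e R" "(a, b) \<in> R" "(c, d) \<in> R"
  shows "(op a c, op b d) \<in> R"
  using rl_right_loopD(2)[OF rl_congruenceD(3)[OF assms(1)] assms(2,3)] by (simp add: rl_pop_def)

lemma rl_cong_div:
  assumes L: "rl_right_loop S op e" and C: "rl_congruence S op e R"
    and "(a, b) \<in> R" "(c, d) \<in> R" "x \<in> S" "y \<in> S" "op x a = c" "op y b = d"
  shows "(x, y) \<in> R"
proof -
  obtain z where z: "z \<in> R" "rl_pop op z (a, b) = (c, d)"
    using rl_right_loopD(5)[OF rl_congruenceD(3)[OF C] assms(3,4)] by blast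
  obtain u v where zuv: "z = (u, v)" by (cases z)
  have "u \<in> S" "v \<in> S" "a \<in> S" "b \<in> S" "op u a = c" "op v b = d"
    using z zuv rl_cong_carrier[OF C] assms(3) by (auto simp: rl_pop_def)
  then have "u = x" "v = y" using rl_right_cancel[OF L] assms(5-8) by metis+
  then show ?thesis using z zuv by simp
qed

lemma rl_cong_full:
  assumes L: "rl_right_loop S op e"
  shows "rl_congruence S op e (S \<times> S)"
proof (rule rl_congruenceI[OF L])
  show "equiv S (S \<times> S)" by (auto simp: equiv_def refl_on_def sym_def trans_def)
  show "(e, e) \<in> S \<times> S" using rl_right_loopD(1)[OF L] by simp
qed (use rl_right_loopD(2)[OF L] in auto)

lemma rl_cong_Id:
  assumes L: "rl_right_loop S op e"
  shows "rl_congruence S op e (Id_on S)"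
proof (rule rl_congruenceI[OF L])
  show "equiv S (Id_on S)" by (auto simp: equiv_def refl_on_def sym_def trans_def)
  show "(e, e) \<in> Id_on S" using rl_right_loopD(1)[OF L] by auto
next
  fix a b c d assume "(a, b) \<in> Id_on S" "(c, d) \<in> Id_on S"
  then show "(op a c, op b d) \<in> Id_on S" using rl_right_loopD(2)[OF L] by auto
next
  fix a b c d x y
  assume "(a, b) \<in> Id_on S" "(c, d) \<in> Id_on S" "x \<in> S" "y \<in> S" "op x a = c" "op y b = d"
  then have "a \<in> S" "op x a = op y a" by auto
  then show "(x, y) \<in> Id_on S" using rl_right_cancel[OF L \<open>x \<in> S\<close> \<open>y \<in> S\<close>] \<open>y \<in> S\<close> by auto
qed

text \<open>Congruences are closed under (relative) intersection; needed for the existence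
  of the derived subloop.\<close>
lemma rl_cong_Inter:
  assumes L: "rl_right_loop S op e" and Rs: "\<And>R. R \<in> Rs \<Longrightarrow> rl_congruence S op e R"
  shows "rl_congruence S op e ((S \<times> S) \<inter> \<Inter>Rs)"
proof (rule rl_congruenceI[OF L])
  show "equiv S ((S \<times> S) \<inter> \<Inter>Rs)"
  proof (rule equivI)
    show "refl_on S ((S \<times> S) \<inter> \<Inter>Rs)" by (rule refl_onI) (use rl_cong_refl[OF Rs] in blast)
    show "sym ((S \<times> S) \<inter> \<Inter>Rs)" by (rule symI) (use rl_cong_sym[OF Rs] in blast)
    show "trans ((S \<times> S) \<inter> \<Inter>Rs)" by (rule transI) (use rl_cong_trans[OF Rs] in blast)
  qed blast
  show "(e, e) \<in> (S \<times> S) \<inter> \<Inter>Rs" using rl_right_loopD(1)[OF L] rl_cong_refl[OF Rs] by blast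
next
  fix a b c d assume "(a, b) \<in> (S \<times> S) \<inter> \<Inter>Rs" "(c, d) \<in> (S \<times> S) \<inter> \<Inter>Rs"
  then show "(op a c, op b d) \<in> (S \<times> S) \<inter> \<Inter>Rs"
    using rl_cong_mult[OF Rs] rl_right_loopD(2)[OF L] by blast
next
  fix a b c d x y
  assume "(a, b) \<in> (S \<times> S) \<inter> \<Inter>Rs" "(c, d) \<in> (S \<times> S) \<inter> \<Inter>Rs" "x \<in> S" "y \<in> S"
    "op x a = c" "op y b = d"
  then show "(x, y) \<in> (S \<times> S) \<inter> \<Inter>Rs" using rl_cong_div[OF L Rs] by blast
qed

lemma rl_cong_restrict:
  assumes L: "rl_right_loop S op e" and LA: "rl_right_loop A op e" and AS: "A \<subseteq> S"
    and C: "rl_congruence S op e R"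
  shows "rl_congruence A op e (R \<inter> A \<times> A)"
proof (rule rl_congruenceI[OF LA])
  show "equiv A (R \<inter> A \<times> A)"
  proof (rule equivI)
    show "refl_on A (R \<inter> A \<times> A)" by (rule refl_onI) (use AS rl_cong_refl[OF C] in blast)
    show "sym (R \<inter> A \<times> A)" by (rule symI) (use rl_cong_sym[OF C] in blast)
    show "trans (R \<inter> A \<times> A)" by (rule transI) (use rl_cong_trans[OF C] in blast)
  qed blast
  show "(e, e) \<in> R \<inter> A \<times> A" using rl_right_loopD(1)[OF LA] AS rl_cong_refl[OF C] by blast
next
  fix a b c d assume "(a, b) \<in> R \<inter> A \<times> A" "(c, d) \<in> R \<inter> A \<times> A"
  then show "(op a c, op b d) \<in> R \<inter> A \<times> A"
    using rl_cong_mult[OF C] rl_right_loopD(2)[OF LA] by blast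
next
  fix a b c d x y
  assume "(a, b) \<in> R \<inter> A \<times> A" "(c, d) \<in> R \<inter> A \<times> A" "x \<in> A" "y \<in> A"
    "op x a = c" "op y b = d"
  then show "(x, y) \<in> R \<inter> A \<times> A" using rl_cong_div[OF L C] AS by blast
qed

lemma rl_cong_class_right_loop:
  assumes L: "rl_right_loop S op e" and C: "rl_congruence S op e R"
  shows "rl_right_loop (R `` {e}) op e"
  unfolding rl_right_loop_def
proof (intro conjI ballI)
  have eS: "e \<in> S" using rl_right_loopD(1)[OF L] .
  have sub: "R `` {e} \<subseteq> S" using rl_cong_carrier[OF C] by blast
  show "e \<in> R `` {e}" using rl_cong_refl[OF C eS] by simp
  show "op x y \<in> R `` {e}" if "x \<in> R `` {e}" "y \<in> R `` {e}" for x y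
    using rl_cong_mult[OF C, of e x e y] that rl_right_loopD(3)[OF L eS] by simp
  show "op e x = x" "op x e = x" if "x \<in> R `` {e}" for x
    using that sub rl_right_loopD(3,4)[OF L] by auto
  fix a b assume a: "a \<in> R `` {e}" and b: "b \<in> R `` {e}"
  have aS: "a \<in> S" and bS: "b \<in> S" using a b sub by auto
  obtain x where x: "x \<in> S" "op x a = b" using rl_right_div[OF L aS bS] .
  have "(e, x) \<in> R" using rl_cong_div[OF L C _ _ eS x(1)] a b x(2) rl_right_loopD(3)[OF L eS] by simp
  show "\<exists>!x. x \<in> R `` {e} \<and> op x a = b"
  proof (rule ex1I[of _ x])
    show "x \<in> R `` {e} \<and> op x a = b" using \<open>(e, x) \<in> R\<close> x by simp
    fix y assume "y \<in> R `` {e} \<and> op y a = b"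
    then show "y = x" using rl_right_cancel[OF L _ x(1) aS] sub x(2) by auto
  qed
qed

section \<open>The elements that commute and associate with everything\<close>

text \<open>Z(S) consists of the elements z that commute with every x and can be moved out
  of any product on the left and on the right.  It will turn out to be the centre of S.\<close>
definition rl_Zset :: "'a set \<Rightarrow> ('a \<Rightarrow> 'a \<Rightarrow> 'a) \<Rightarrow> 'a set" where
  "rl_Zset S op = {z \<in> S. \<forall>x\<in>S. \<forall>y\<in>S. op z x = op x z \<and>
      op (op z x) y = op z (op x y) \<and> op (op x y) z = op x (op y z)}"

lemma rl_ZsetD:
  assumes "z \<in> rl_Zset S op" "x \<in> S" "y \<in> S"
  shows "z \<in> S" "op z x = op x z" "op (op z x) y = op z (op x y)"
    "op (op x y) z = op x (op y z)"
  using assms unfolding rl_Zset_def by blast+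

lemma rl_Zset_in: "z \<in> rl_Zset S op \<Longrightarrow> z \<in> S"
  by (simp add: rl_Zset_def)

text \<open>The third associativity law, with z in the middle, is a consequence.\<close>
lemma rl_Zset_middle:
  assumes L: "rl_right_loop S op e" and z: "z \<in> rl_Zset S op" and x: "x \<in> S" and y: "y \<in> S"
  shows "op (op x z) y = op x (op z y)"
proof -
  note cl = rl_right_loopD(2)[OF L]
  have "op (op x z) y = op (op z x) y" using rl_ZsetD(2)[OF z x x] by simp
  also have "\<dots> = op z (op x y)" using rl_ZsetD(3)[OF z x y] .
  also have "\<dots> = op (op x y) z" using rl_ZsetD(2)[OF z cl[OF x y] x] .
  also have "\<dots> = op x (op y z)" using rl_ZsetD(4)[OF z x y] .
  also have "\<dots> = op x (op z y)" using rl_ZsetD(2)[OF z y y] by simp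
  finally show ?thesis .
qed

lemma rl_Zset_unit:
  assumes "rl_right_loop S op e" shows "e \<in> rl_Zset S op"
  using rl_right_loopD[OF assms] unfolding rl_Zset_def by auto

lemma rl_Zset_mult:
  assumes L: "rl_right_loop S op e" and z: "z \<in> rl_Zset S op" and w: "w \<in> rl_Zset S op"
  shows "op z w \<in> rl_Zset S op"
proof -
  note cl = rl_right_loopD(2)[OF L]
  have zS: "z \<in> S" and wS: "w \<in> S" using z w by (auto simp: rl_Zset_def)
  have "op (op z w) x = op x (op z w) \<and> op (op (op z w) x) y = op (op z w) (op x y) \<and>
        op (op x y) (op z w) = op x (op y (op z w))" if x: "x \<in> S" and y: "y \<in> S" for x y
  proof (intro conjI)
    note Zz = rl_ZsetD[OF z] and Zw = rl_ZsetD[OF w]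
    have "op (op z w) x = op z (op w x)" using Zz(3)[OF wS x] .
    also have "\<dots> = op z (op x w)" using Zw(2)[OF x x] by simp
    also have "\<dots> = op (op z x) w" using Zz(3)[OF x wS] by simp
    also have "\<dots> = op (op x z) w" using Zz(2)[OF x x] by simp
    also have "\<dots> = op x (op z w)" using Zw(4)[OF x zS] .
    finally show "op (op z w) x = op x (op z w)" .
    have "op (op (op z w) x) y = op (op z (op w x)) y" using Zz(3)[OF wS x] by simp
    also have "\<dots> = op z (op (op w x) y)" using Zz(3)[OF cl[OF wS x] y] .
    also have "\<dots> = op z (op w (op x y))" using Zw(3)[OF x y] by simp
    also have "\<dots> = op (op z w) (op x y)" using Zz(3)[OF wS cl[OF x y]] by simp
    finally show "op (op (op z w) x) y = op (op z w) (op x y)" .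
    have "op (op x y) (op z w) = op (op (op x y) z) w" using Zw(4)[OF cl[OF x y] zS] by simp
    also have "\<dots> = op (op x (op y z)) w" using Zz(4)[OF x y] by simp
    also have "\<dots> = op x (op (op y z) w)" using Zw(4)[OF x cl[OF y zS]] .
    also have "\<dots> = op x (op y (op z w))" using Zw(4)[OF y zS] by simp
    finally show "op (op x y) (op z w) = op x (op y (op z w))" .
  qed
  then show ?thesis using cl[OF zS wS] unfolding rl_Zset_def by blast
qed

text \<open>Elements of Z(S) can be cancelled on the left, since they commute.\<close>
lemma rl_Zset_left_cancel:
  assumes L: "rl_right_loop S op e" and z: "z \<in> rl_Zset S op" and "a \<in> S" "b \<in> S"
    and "op z a = op z b"
  shows "a = b"
proof -
  have "op a z = op b z" using rl_ZsetD(2)[OF z assms(3) assms(3)] rl_ZsetD(2)[OF z assms(4) assms(4)] assms(5) by simp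
  then show ?thesis using rl_right_cancel[OF L assms(3,4) rl_ZsetD(1)[OF z assms(3,3)]] by simp
qed

text \<open>A left inverse of an element of Z(S) is a two-sided inverse and lies in Z(S);
  so Z(S) is an abelian group.\<close>
lemma rl_Zset_inverse:
  assumes L: "rl_right_loop S op e" and z: "z \<in> rl_Zset S op"
  obtains w where "w \<in> rl_Zset S op" "op w z = e" "op z w = e"
proof -
  note cl = rl_right_loopD(2)[OF L] and unitl = rl_right_loopD(3)[OF L]
    and unitr = rl_right_loopD(4)[OF L] and Zz = rl_ZsetD[OF z]
  note mid = rl_Zset_middle[OF L z] and lcancel = rl_Zset_left_cancel[OF L z]
  have zS: "z \<in> S" using z by (simp add: rl_Zset_def)
  obtain w where wS: "w \<in> S" and wz: "op w z = e" using rl_right_div[OF L zS rl_right_loopD(1)[OF L]] .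
  have zw: "op z w = e"
  proof -
    have "op (op z w) z = op z (op w z)" using Zz(4)[OF zS wS] .
    also have "\<dots> = op e z" using wz unitr[OF zS] unitl[OF zS] by simp
    finally show ?thesis using rl_right_cancel[OF L cl[OF zS wS] rl_right_loopD(1)[OF L] zS] by simp
  qed
  have z_w_left: "op z (op w u) = u" if u: "u \<in> S" for u
    using Zz(3)[OF wS u] zw unitl[OF u] by simp
  have z_w_right: "op z (op u w) = u" if u: "u \<in> S" for u
  proof -
    have "op z (op u w) = op (op u z) w" using Zz(3)[OF u wS] Zz(2)[OF u u] by simp
    also have "\<dots> = u" using mid[OF u wS] zw unitr[OF u] by simp
    finally show ?thesis .
  qed
  have "op w x = op x w \<and> op (op w x) y = op w (op x y) \<and> op (op x y) w = op x (op y w)"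
    if x: "x \<in> S" and y: "y \<in> S" for x y
  proof (intro conjI)
    have "op (op w x) z = op (op w z) x" using Zz(4)[OF wS x] Zz(2)[OF x x] mid[OF wS x] by simp
    also have "\<dots> = op (op x w) z" using wz unitl[OF x] Zz(4)[OF x wS] unitr[OF x] by simp
    finally show "op w x = op x w" using rl_right_cancel[OF L cl[OF wS x] cl[OF x wS] zS] by simp
    have "op z (op (op w x) y) = op x y" using Zz(3)[OF cl[OF wS x] y] z_w_left[OF x] by simp
    moreover have "op z (op w (op x y)) = op x y" using z_w_left[OF cl[OF x y]] .
    ultimately show "op (op w x) y = op w (op x y)"
      using lcancel[OF cl[OF cl[OF wS x] y] cl[OF wS cl[OF x y]]] by simp
    have "op z (op x (op y w)) = op (op z x) (op y w)" using Zz(3)[OF x cl[OF y wS]] by simp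
    also have "\<dots> = op x (op z (op y w))" using Zz(2)[OF x x] mid[OF x cl[OF y wS]] by simp
    also have "\<dots> = op x y" using z_w_right[OF y] by simp
    finally show "op (op x y) w = op x (op y w)"
      using z_w_right[OF cl[OF x y]] lcancel[OF cl[OF cl[OF x y] wS] cl[OF x cl[OF y wS]]] by simp
  qed
  then have "w \<in> rl_Zset S op" using wS unfolding rl_Zset_def by blast
  then show ?thesis using that wz zw by blast
qed

lemma rl_Zset_collect:
  assumes L: "rl_right_loop S op e" and d: "d \<in> rl_Zset S op" and f: "f \<in> rl_Zset S op"
    and x: "x \<in> S" and a: "a \<in> S"
  shows "op (op d x) (op f a) = op (op d f) (op x a)"
proof -
  note cl = rl_right_loopD(2)[OF L]
  have fS: "f \<in> S" using f by (simp add: rl_Zset_def)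
  have "op (op d x) (op f a) = op d (op x (op f a))" using rl_ZsetD(3)[OF d x cl[OF fS a]] .
  also have "op x (op f a) = op (op f x) a" using rl_Zset_middle[OF L f x a] rl_ZsetD(2)[OF f x x] by simp
  also have "\<dots> = op f (op x a)" using rl_ZsetD(3)[OF f x a] .
  also have "op d (op f (op x a)) = op (op d f) (op x a)" using rl_ZsetD(3)[OF d fS cl[OF x a]] by simp
  finally show ?thesis .
qed

lemma rl_Zset_unique:
  assumes L: "rl_right_loop S op e" and "d \<in> rl_Zset S op" "f \<in> rl_Zset S op" "x \<in> S"
    and "op d x = op f x"
  shows "d = f"
  using rl_right_cancel[OF L _ _ assms(4,5)] assms(2,3) by (simp add: rl_Zset_def)

section \<open>The maximal central congruence\<close>

text \<open>The congruence x ~ z o x (z in Z(S)); it will be shown to be zeta(S).\<close>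
definition rl_Zrel :: "'a set \<Rightarrow> ('a \<Rightarrow> 'a \<Rightarrow> 'a) \<Rightarrow> 'a rel" where
  "rl_Zrel S op = {(x, y). x \<in> S \<and> (\<exists>z\<in>rl_Zset S op. y = op z x)}"

text \<open>The witness of centrality: pairs (x, d o x) and (u, d o u) are related when they
  are shifted by the same central element d.\<close>
definition rl_Zshift :: "'a set \<Rightarrow> ('a \<Rightarrow> 'a \<Rightarrow> 'a) \<Rightarrow> ('a \<times> 'a) rel" where
  "rl_Zshift S op = {((x, y), (u, v)). x \<in> S \<and> u \<in> S \<and>
      (\<exists>d\<in>rl_Zset S op. y = op d x \<and> v = op d u)}"

text \<open>Reflexivity, symmetry and transitivity come from the unit, inverses and
  products in Z(S).\<close>
lemma rl_Zrel_equiv: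
  assumes L: "rl_right_loop S op e"
  shows "equiv S (rl_Zrel S op)"
proof (rule equivI)
  note cl = rl_right_loopD(2)[OF L] and unitl = rl_right_loopD(3)[OF L]
  show "rl_Zrel S op \<subseteq> S \<times> S" by (auto simp: rl_Zrel_def intro: cl rl_Zset_in)
  show "refl_on S (rl_Zrel S op)"
    by (rule refl_onI) (use rl_Zset_unit[OF L] unitl in \<open>force simp: rl_Zrel_def\<close>)
  show "sym (rl_Zrel S op)"
  proof (rule symI)
    fix x y assume "(x, y) \<in> rl_Zrel S op"
    then obtain z where x: "x \<in> S" and z: "z \<in> rl_Zset S op" and y: "y = op z x"
      by (auto simp: rl_Zrel_def)
    obtain w where w: "w \<in> rl_Zset S op" "op w z = e" using rl_Zset_inverse[OF L z] by blast
    have "x = op w y" using y rl_ZsetD(3)[OF w(1) rl_Zset_in[OF z] x] w(2) unitl[OF x] by simp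
    moreover have "y \<in> S" using y cl[OF rl_Zset_in[OF z] x] by simp
    ultimately show "(y, x) \<in> rl_Zrel S op" using w(1) unfolding rl_Zrel_def by blast
  qed
  show "trans (rl_Zrel S op)"
  proof (rule transI)
    fix x y u assume "(x, y) \<in> rl_Zrel S op" "(y, u) \<in> rl_Zrel S op"
    then obtain z w where x: "x \<in> S" and z: "z \<in> rl_Zset S op" "y = op z x"
      and w: "w \<in> rl_Zset S op" "u = op w y" by (auto simp: rl_Zrel_def)
    have "u = op (op w z) x" using rl_ZsetD(3)[OF w(1) rl_Zset_in[OF z(1)] x] z(2) w(2) by simp
    then show "(x, u) \<in> rl_Zrel S op" using x rl_Zset_mult[OF L w(1) z(1)] unfolding rl_Zrel_def by blast
  qed
qed

lemma rl_Zrel_congruence: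
  assumes L: "rl_right_loop S op e"
  shows "rl_congruence S op e (rl_Zrel S op)"
proof (rule rl_congruenceI[OF L rl_Zrel_equiv[OF L]])
  show "(e, e) \<in> rl_Zrel S op"
    using rl_Zset_unit[OF L] rl_right_loopD(1,3)[OF L] unfolding rl_Zrel_def by force
next
  fix a b c d assume "(a, b) \<in> rl_Zrel S op" "(c, d) \<in> rl_Zrel S op"
  then obtain z w where a: "a \<in> S" "z \<in> rl_Zset S op" "b = op z a"
    and c: "c \<in> S" "w \<in> rl_Zset S op" "d = op w c" by (auto simp: rl_Zrel_def)
  have "op b d = op (op z w) (op a c)" using rl_Zset_collect[OF L a(2) c(2) a(1) c(1)] a c by simp
  then show "(op a c, op b d) \<in> rl_Zrel S op"
    using rl_Zset_mult[OF L a(2) c(2)] rl_right_loopD(2)[OF L a(1) c(1)] unfolding rl_Zrel_def by blast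
next
  fix a b c d x y assume "(a, b) \<in> rl_Zrel S op" "(c, d) \<in> rl_Zrel S op" and x: "x \<in> S"
    and y: "y \<in> S" and xa: "op x a = c" and yb: "op y b = d"
  then obtain w z where a: "a \<in> S" "w \<in> rl_Zset S op" "b = op w a"
    and c: "z \<in> rl_Zset S op" "d = op z c" by (auto simp: rl_Zrel_def)
  obtain w' where w': "w' \<in> rl_Zset S op" "op w' w = e" using rl_Zset_inverse[OF L a(2)] by blast
  define u where "u = op z w'"
  have u: "u \<in> rl_Zset S op" unfolding u_def using rl_Zset_mult[OF L c(1) w'(1)] .
  have "op u w = z"
    using rl_ZsetD(4)[OF a(2) rl_Zset_in[OF c(1)] rl_Zset_in[OF w'(1)]] w'(2)
      rl_right_loopD(4)[OF L rl_Zset_in[OF c(1)]] u_def by simp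
  then have "op (op u x) b = op y b"
    using rl_Zset_collect[OF L u a(2) x a(1)] a(3) c(2) xa yb by simp
  moreover have "op u x \<in> S" "op w a \<in> S"
    using rl_right_loopD(2)[OF L] rl_Zset_in[OF u] rl_Zset_in[OF a(2)] x a(1) by simp_all
  ultimately have "y = op u x" using rl_right_cancel[OF L _ y] a(3) by metis
  then show "(x, y) \<in> rl_Zrel S op" using x u unfolding rl_Zrel_def by blast
qed

text \<open>Transitivity of the shift relation uses that the shifting central element is
  determined by its action on one element.\<close>
lemma rl_Zshift_equiv:
  assumes L: "rl_right_loop S op e"
  shows "equiv (rl_Zrel S op) (rl_Zshift S op)"
proof (rule equivI)
  show "rl_Zshift S op \<subseteq> rl_Zrel S op \<times> rl_Zrel S op"
    unfolding rl_Zshift_def rl_Zrel_def by blast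
  show "refl_on (rl_Zrel S op) (rl_Zshift S op)"
    by (rule refl_onI) (auto simp: rl_Zshift_def rl_Zrel_def)
  show "sym (rl_Zshift S op)" by (rule symI) (auto simp: rl_Zshift_def)
  show "trans (rl_Zshift S op)"
  proof (rule transI)
    fix p q r assume "(p, q) \<in> rl_Zshift S op" "(q, r) \<in> rl_Zshift S op"
    then obtain x u a d f where p: "p = (x, op d x)" and q: "q = (u, op d u)" "q = (u, op f u)"
      and r: "r = (a, op f a)" and S: "x \<in> S" "u \<in> S" "a \<in> S"
      and df: "d \<in> rl_Zset S op" "f \<in> rl_Zset S op"
      unfolding rl_Zshift_def by auto
    have "d = f" using rl_Zset_unique[OF L df S(2)] q by simp
    then show "(p, r) \<in> rl_Zshift S op" using p r S df unfolding rl_Zshift_def by blast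
  qed
qed

lemma rl_Zshift_congruence:
  assumes L: "rl_right_loop S op e"
  shows "rl_congruence (rl_Zrel S op) (rl_pop op) (e, e) (rl_Zshift S op)"
proof (rule rl_congruenceI[OF rl_congruenceD(3)[OF rl_Zrel_congruence[OF L]] rl_Zshift_equiv[OF L]])
  show "((e, e), e, e) \<in> rl_Zshift S op"
    using rl_Zset_unit[OF L] rl_right_loopD(1,3)[OF L] unfolding rl_Zshift_def by force
next
  fix p q r t assume "(p, q) \<in> rl_Zshift S op" "(r, t) \<in> rl_Zshift S op"
  then obtain x u d a c f where pq: "p = (x, op d x)" "q = (u, op d u)" "x \<in> S" "u \<in> S"
      "d \<in> rl_Zset S op" and rt: "r = (a, op f a)" "t = (c, op f c)" "a \<in> S" "c \<in> S"
      "f \<in> rl_Zset S op" unfolding rl_Zshift_def by auto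
  have "rl_pop op p r = (op x a, op (op d f) (op x a))" "rl_pop op q t = (op u c, op (op d f) (op u c))"
    using rl_Zset_collect[OF L pq(5) rt(5)] pq rt by (auto simp: rl_pop_def)
  then show "(rl_pop op p r, rl_pop op q t) \<in> rl_Zshift S op"
    using rl_Zset_mult[OF L pq(5) rt(5)] rl_right_loopD(2)[OF L] pq rt unfolding rl_Zshift_def by auto
next
  fix p q r t X Y assume "(p, q) \<in> rl_Zshift S op" "(r, t) \<in> rl_Zshift S op"
    and X: "X \<in> rl_Zrel S op" and Y: "Y \<in> rl_Zrel S op"
    and XP: "rl_pop op X p = r" and YQ: "rl_pop op Y q = t"
  then obtain a b d c k h where pq: "p = (a, op d a)" "q = (b, op d b)" "a \<in> S" "b \<in> S"
      "d \<in> rl_Zset S op" and rt: "r = (c, op h c)" "t = (k, op h k)" "h \<in> rl_Zset S op"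
    unfolding rl_Zshift_def by auto
  note cl = rl_right_loopD(2)[OF L]
  obtain x1 f where Xf: "X = (x1, op f x1)" "x1 \<in> S" "f \<in> rl_Zset S op"
    using X unfolding rl_Zrel_def by auto
  obtain y1 g where Yg: "Y = (y1, op g y1)" "y1 \<in> S" "g \<in> rl_Zset S op"
    using Y unfolding rl_Zrel_def by auto
  text \<open>Comparing second components forces f o d = h = g o d, hence f = g.\<close>
  have XP': "op x1 a = c" "op (op f x1) (op d a) = op h c"
    using XP Xf(1) pq(1) rt(1) by (simp_all add: rl_pop_def)
  have YQ': "op y1 b = k" "op (op g y1) (op d b) = op h k"
    using YQ Yg(1) pq(2) rt(2) by (simp_all add: rl_pop_def)
  have "op (op f d) (op x1 a) = op (op f x1) (op d a)"
    using rl_Zset_collect[OF L Xf(3) pq(5) Xf(2) pq(3)] by simp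
  also have "\<dots> = op h (op x1 a)" using XP' by simp
  finally have fd: "op f d = h"
    using rl_Zset_unique[OF L rl_Zset_mult[OF L Xf(3) pq(5)] rt(3) cl[OF Xf(2) pq(3)]] by simp
  have "op (op g d) (op y1 b) = op (op g y1) (op d b)"
    using rl_Zset_collect[OF L Yg(3) pq(5) Yg(2) pq(4)] by simp
  also have "\<dots> = op h (op y1 b)" using YQ' by simp
  finally have gd: "op g d = h"
    using rl_Zset_unique[OF L rl_Zset_mult[OF L Yg(3) pq(5)] rt(3) cl[OF Yg(2) pq(4)]] by simp
  have "f = g" using rl_Zset_unique[OF L Xf(3) Yg(3) rl_Zset_in[OF pq(5)]] fd gd by simp
  then show "(X, Y) \<in> rl_Zshift S op" using Xf Yg unfolding rl_Zshift_def by blast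
qed

lemma rl_Zshift_class:
  assumes L: "rl_right_loop S op e" and x: "x \<in> S" and d: "d \<in> rl_Zset S op" and y: "y = op d x"
  shows "rl_Zshift S op `` {(x, y)} = (\<lambda>u. (u, op d u)) ` S"
proof (intro equalityI subsetI)
  fix p assume "p \<in> rl_Zshift S op `` {(x, y)}"
  then have "((x, y), p) \<in> rl_Zshift S op" by simp
  then obtain u f where "p = (u, op f u)" "u \<in> S" "f \<in> rl_Zset S op" "y = op f x"
    unfolding rl_Zshift_def by auto
  moreover then have "f = d" using rl_Zset_unique[OF L _ d x] y by simp
  ultimately show "p \<in> (\<lambda>u. (u, op d u)) ` S" by blast
next
  fix p assume "p \<in> (\<lambda>u. (u, op d u)) ` S"
  then obtain u where "p = (u, op d u)" "u \<in> S" by blast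
  then show "p \<in> rl_Zshift S op `` {(x, y)}" using x d y unfolding rl_Zshift_def by blast
qed

lemma rl_Zrel_central:
  assumes L: "rl_right_loop S op e"
  shows "rl_central S op e (rl_Zrel S op)"
  unfolding rl_central_def rl_centralizes_def
proof (intro conjI exI[of _ "rl_Zshift S op"])
  note cl = rl_right_loopD(2)[OF L]
  show "rl_congruence S op e (rl_Zrel S op)" using rl_Zrel_congruence[OF L] .
  show "rl_congruence S op e (S \<times> S)" using rl_cong_full[OF L] .
  show "rl_congruence (rl_Zrel S op) (rl_pop op) (e, e) (rl_Zshift S op)"
    using rl_Zshift_congruence[OF L] .
  show "\<forall>x y u v. ((x, y), u, v) \<in> rl_Zshift S op \<longrightarrow> (x, u) \<in> S \<times> S"
    unfolding rl_Zshift_def by blast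
  show "\<forall>x y. (x, y) \<in> rl_Zrel S op \<longrightarrow> bij_betw fst (rl_Zshift S op `` {(x, y)}) ((S \<times> S) `` {x})"
  proof (intro allI impI)
    fix x y assume "(x, y) \<in> rl_Zrel S op"
    then obtain d where d: "x \<in> S" "d \<in> rl_Zset S op" "y = op d x" unfolding rl_Zrel_def by blast
    have "rl_Zshift S op `` {(x, y)} = (\<lambda>u. (u, op d u)) ` S" using rl_Zshift_class[OF L d] .
    moreover have "bij_betw fst ((\<lambda>u. (u, op d u)) ` S) S"
      by (auto simp: bij_betw_def inj_on_def image_image)
    moreover have "(S \<times> S) `` {x} = S" using d(1) by blast
    ultimately show "bij_betw fst (rl_Zshift S op `` {(x, y)}) ((S \<times> S) `` {x})" by simp
  qed
  show "\<forall>x y. (x, y) \<in> S \<times> S \<longrightarrow> ((x, x), y, y) \<in> rl_Zshift S op"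
  proof (intro allI impI)
    fix x y assume "(x, y) \<in> S \<times> S"
    moreover have "x = op e x" "y = op e y" using calculation rl_right_loopD(3)[OF L] by auto
    ultimately show "((x, x), y, y) \<in> rl_Zshift S op"
      using rl_Zset_unit[OF L] unfolding rl_Zshift_def by blast
  qed
  show "\<forall>x y u v. ((x, y), u, v) \<in> rl_Zshift S op \<longrightarrow> ((y, x), v, u) \<in> rl_Zshift S op"
  proof (intro allI impI)
    fix x y u v assume "((x, y), u, v) \<in> rl_Zshift S op"
    then obtain d where d: "x \<in> S" "u \<in> S" "d \<in> rl_Zset S op" "y = op d x" "v = op d u"
      unfolding rl_Zshift_def by blast
    obtain d' where d': "d' \<in> rl_Zset S op" "op d' d = e" using rl_Zset_inverse[OF L d(3)] by blast
    have undo: "op d' (op d a) = a" if "a \<in> S" for a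
      using rl_ZsetD(3)[OF d'(1) rl_Zset_in[OF d(3)] that] d'(2) rl_right_loopD(3)[OF L that] by simp
    have "y \<in> S" "v \<in> S" using d cl[OF rl_Zset_in[OF d(3)]] by auto
    moreover have "x = op d' y" "u = op d' v" using undo[OF d(1)] undo[OF d(2)] d(4,5) by simp_all
    ultimately show "((y, x), v, u) \<in> rl_Zshift S op"
      using d'(1) unfolding rl_Zshift_def by blast
  qed
  show "\<forall>x y z u v w. ((x, y), u, v) \<in> rl_Zshift S op \<and> ((y, z), v, w) \<in> rl_Zshift S op \<longrightarrow>
      ((x, z), u, w) \<in> rl_Zshift S op"
  proof (intro allI impI)
    fix x y z u v w assume "((x, y), u, v) \<in> rl_Zshift S op \<and> ((y, z), v, w) \<in> rl_Zshift S op"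
    then obtain d f where d: "x \<in> S" "u \<in> S" "d \<in> rl_Zset S op" "y = op d x" "v = op d u"
      and f: "f \<in> rl_Zset S op" "z = op f y" "w = op f v"
      unfolding rl_Zshift_def by blast
    have "z = op (op f d) x" "w = op (op f d) u"
      using f d rl_ZsetD(3)[OF f(1) rl_Zset_in[OF d(3)]] by simp_all
    then show "((x, z), u, w) \<in> rl_Zshift S op"
      using d rl_Zset_mult[OF L f(1) d(3)] unfolding rl_Zshift_def by blast
  qed
qed

text \<open>Both sides are second components of pairs in the class of (e, t o s) under the
  witnessing congruence, whose first components agree.\<close>
lemma rl_central_medial:
  assumes L: "rl_right_loop S op e" and cen: "rl_central S op e \<beta>"
    and t: "(e, t) \<in> \<beta>" and s: "(e, s) \<in> \<beta>" and x: "x \<in> S" and a: "a \<in> S"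
  shows "op (op t x) (op s a) = op (op t s) (op x a)"
proof -
  note cl = rl_right_loopD(2)[OF L] and unitl = rl_right_loopD(3)[OF L]
    and unitr = rl_right_loopD(4)[OF L] and eS = rl_right_loopD(1)[OF L]
  have B: "rl_congruence S op e \<beta>" using cen unfolding rl_central_def rl_centralizes_def by blast
  obtain C where CC: "rl_congruence \<beta> (rl_pop op) (e, e) C"
    and bij: "\<forall>x y. (x, y) \<in> \<beta> \<longrightarrow> bij_betw fst (C `` {(x, y)}) ((S \<times> S) `` {x})"
    and diag: "\<forall>x y. (x, y) \<in> S \<times> S \<longrightarrow> ((x, x), (y, y)) \<in> C"
    using cen unfolding rl_central_def rl_centralizes_def by blast
  have shift: "((u, op d u), (v, op d v)) \<in> C" if d: "(e, d) \<in> \<beta>" and "u \<in> S" "v \<in> S" for d u v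
  proof -
    have "(rl_pop op (e, d) (u, u), rl_pop op (e, d) (v, v)) \<in> C"
      using rl_cong_mult[OF CC rl_cong_refl[OF CC d] diag[rule_format, of u v]] that by simp
    then show ?thesis using unitl that by (simp add: rl_pop_def)
  qed
  have fst_inj: "w = w'" if "(p, (u, w)) \<in> C" "(p, (u, w')) \<in> C" "p \<in> \<beta>" for p u w w'
  proof -
    obtain y1 y2 where p: "p = (y1, y2)" by (cases p)
    have "inj_on fst (C `` {p})" using bij that(3) p by (auto simp: bij_betw_def)
    then have "(u, w) = (u, w')" by (rule inj_onD) (use that(1,2) in auto)
    then show ?thesis by simp
  qed
  have tS: "t \<in> S" and sS: "s \<in> S" using rl_cong_carrier(2)[OF B] t s by auto
  have ts: "(e, op t s) \<in> \<beta>" using rl_cong_mult[OF B t s] unitl[OF eS] by simp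
  have "(rl_pop op (x, op t x) (a, op s a), rl_pop op (e, op t e) (e, op s e)) \<in> C"
    using rl_cong_mult[OF CC shift[OF t x eS] shift[OF s a eS]] .
  then have 1: "((e, op t s), (op x a, op (op t x) (op s a))) \<in> C"
    using rl_cong_sym[OF CC] unitl[OF eS] unitr[OF tS] unitr[OF sS] by (simp add: rl_pop_def)
  have 2: "((e, op t s), (op x a, op (op t s) (op x a))) \<in> C"
    using rl_cong_sym[OF CC shift[OF ts cl[OF x a] eS]] unitr[OF cl[OF tS sS]] by simp
  show ?thesis using fst_inj[OF 1 2 ts] .
qed

lemma rl_central_class_in_Zset:
  assumes L: "rl_right_loop S op e" and cen: "rl_central S op e \<beta>" and t: "(e, t) \<in> \<beta>"
  shows "t \<in> rl_Zset S op"
proof -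
  note unitl = rl_right_loopD(3)[OF L] and unitr = rl_right_loopD(4)[OF L]
    and cl = rl_right_loopD(2)[OF L] and eS = rl_right_loopD(1)[OF L]
  have B: "rl_congruence S op e \<beta>" using cen unfolding rl_central_def rl_centralizes_def by blast
  have ee: "(e, e) \<in> \<beta>" using rl_cong_refl[OF B eS] .
  have tS: "t \<in> S" using rl_cong_carrier(2)[OF B t] .
  have comm: "op t x = op x t" if x: "x \<in> S" for x
    using rl_central_medial[OF L cen ee t x eS] unitl unitr x tS by simp
  have left: "op (op t x) y = op t (op x y)" if "x \<in> S" "y \<in> S" for x y
    using rl_central_medial[OF L cen t ee that] unitl unitr that tS by simp
  have right: "op (op x y) t = op x (op y t)" if x: "x \<in> S" and y: "y \<in> S" for x y
  proof -
    have "op x (op t y) = op t (op x y)"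
      using rl_central_medial[OF L cen ee t x y] unitl x tS by simp
    then show ?thesis using comm[OF cl[OF x y]] comm[OF y] by simp
  qed
  show ?thesis using tS comm left right unfolding rl_Zset_def by blast
qed

lemma rl_central_le_Zrel:
  assumes L: "rl_right_loop S op e" and cen: "rl_central S op e \<beta>"
  shows "\<beta> \<subseteq> rl_Zrel S op"
proof
  fix p assume p: "p \<in> \<beta>"
  have B: "rl_congruence S op e \<beta>" using cen unfolding rl_central_def rl_centralizes_def by blast
  obtain x y where pxy: "p = (x, y)" by (cases p)
  have xS: "x \<in> S" and yS: "y \<in> S" using rl_cong_carrier[OF B] p pxy by auto
  obtain t where t: "t \<in> S" "op t x = y" using rl_right_div[OF L xS yS] .
  have "(e, t) \<in> \<beta>"
    using rl_cong_div[OF L B rl_cong_refl[OF B xS] p[unfolded pxy] rl_right_loopD(1)[OF L] t(1)]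
      t(2) rl_right_loopD(3)[OF L xS] by simp
  then show "p \<in> rl_Zrel S op"
    using rl_central_class_in_Zset[OF L cen] t xS pxy unfolding rl_Zrel_def by blast
qed

lemma rl_zeta_eq:
  assumes L: "rl_right_loop S op e"
  shows "rl_zeta S op e = rl_Zrel S op"
  unfolding rl_zeta_def
  by (rule the_equality) (use rl_Zrel_central[OF L] rl_central_le_Zrel[OF L] in blast)+

lemma rl_center_eq:
  assumes L: "rl_right_loop S op e"
  shows "rl_center S op e = rl_Zset S op"
  unfolding rl_center_def rl_zeta_eq[OF L]
  using rl_right_loopD(1,4)[OF L] rl_Zset_in by (force simp: rl_Zrel_def)

section \<open>Quotients by invariant right subloops\<close>

text \<open>Throughout, T = R``{e} for a congruence R, and p = rl_qrep S op T is the map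
  sending x to the chosen representative of its coset T o x.  The coset T o x is
  exactly the R-class of x.\<close>
lemma rl_coset_eq_class:
  assumes L: "rl_right_loop S op e" and C: "rl_congruence S op e R" and y: "y \<in> S"
  shows "rl_coset op (R `` {e}) y = R `` {y}"
proof (intro equalityI subsetI)
  fix x assume "x \<in> rl_coset op (R `` {e}) y"
  then obtain t where t: "(e, t) \<in> R" "x = op t y" unfolding rl_coset_def by blast
  have "(op e y, op t y) \<in> R" using rl_cong_mult[OF C t(1) rl_cong_refl[OF C y]] .
  then show "x \<in> R `` {y}" using t(2) rl_right_loopD(3)[OF L y] by simp
next
  fix x assume "x \<in> R `` {y}"
  then have yx: "(y, x) \<in> R" by simp
  obtain t where t: "t \<in> S" "op t y = x" using rl_right_div[OF L y rl_cong_carrier(2)[OF C yx]] .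
  have "(e, t) \<in> R"
    using rl_cong_div[OF L C rl_cong_refl[OF C y] yx rl_right_loopD(1)[OF L] t(1)] t(2)
      rl_right_loopD(3)[OF L y] by simp
  then show "x \<in> rl_coset op (R `` {e}) y" using t(2) unfolding rl_coset_def by blast
qed

lemma rl_qrep_props:
  assumes L: "rl_right_loop S op e" and C: "rl_congruence S op e R" and x: "x \<in> S"
  shows "rl_qrep S op (R `` {e}) x \<in> S" "(rl_qrep S op (R `` {e}) x, x) \<in> R"
proof -
  let ?T = "R `` {e}"
  have "\<exists>y. y \<in> S \<and> rl_coset op ?T y = rl_coset op ?T x" using x by blast
  then have h: "rl_qrep S op ?T x \<in> S \<and> rl_coset op ?T (rl_qrep S op ?T x) = rl_coset op ?T x"
    unfolding rl_qrep_def by (rule someI_ex)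
  then show "rl_qrep S op ?T x \<in> S" by simp
  have "R `` {rl_qrep S op ?T x} = R `` {x}"
    using h rl_coset_eq_class[OF L C x] rl_coset_eq_class[OF L C, of "rl_qrep S op ?T x"] by simp
  then show "(rl_qrep S op ?T x, x) \<in> R"
    using x eq_equiv_class_iff[OF rl_congruenceD(1)[OF C]] h by blast
qed

lemma rl_qrep_eq_iff:
  assumes L: "rl_right_loop S op e" and C: "rl_congruence S op e R" and x: "x \<in> S" and y: "y \<in> S"
  shows "rl_qrep S op (R `` {e}) x = rl_qrep S op (R `` {e}) y \<longleftrightarrow> (x, y) \<in> R"
proof
  assume "rl_qrep S op (R `` {e}) x = rl_qrep S op (R `` {e}) y"
  then show "(x, y) \<in> R"
    using rl_qrep_props(2)[OF L C x] rl_qrep_props(2)[OF L C y] rl_cong_sym[OF C] rl_cong_trans[OF C]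
    by metis
next
  assume "(x, y) \<in> R"
  then have "R `` {x} = R `` {y}" using eq_equiv_class_iff[OF rl_congruenceD(1)[OF C] x y] by simp
  then have "rl_coset op (R `` {e}) x = rl_coset op (R `` {e}) y" using rl_coset_eq_class[OF L C] x y by simp
  then show "rl_qrep S op (R `` {e}) x = rl_qrep S op (R `` {e}) y" unfolding rl_qrep_def by simp
qed

lemma rl_qrep_hom:
  assumes L: "rl_right_loop S op e" and C: "rl_congruence S op e R" and x: "x \<in> S" and y: "y \<in> S"
  shows "rl_qop S op (R `` {e}) (rl_qrep S op (R `` {e}) x) (rl_qrep S op (R `` {e}) y)
       = rl_qrep S op (R `` {e}) (op x y)"
proof -
  let ?p = "rl_qrep S op (R `` {e})"
  note cl = rl_right_loopD(2)[OF L]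
  have "(op (?p x) (?p y), op x y) \<in> R"
    using rl_cong_mult[OF C rl_qrep_props(2)[OF L C x] rl_qrep_props(2)[OF L C y]] .
  then show ?thesis unfolding rl_qop_def
    using rl_qrep_eq_iff[OF L C cl[OF rl_qrep_props(1)[OF L C x] rl_qrep_props(1)[OF L C y]] cl[OF x y]]
    by simp
qed

lemma rl_quotient_right_loop:
  assumes L: "rl_right_loop S op e" and C: "rl_congruence S op e R"
  shows "rl_right_loop (rl_qcarrier S op (R `` {e})) (rl_qop S op (R `` {e})) (rl_qrep S op (R `` {e}) e)"
proof -
  let ?p = "rl_qrep S op (R `` {e})" and ?Q = "rl_qcarrier S op (R `` {e})"
    and ?o = "rl_qop S op (R `` {e})"
  note cl = rl_right_loopD(2)[OF L] and eS = rl_right_loopD(1)[OF L] and hom = rl_qrep_hom[OF L C]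
  have Q: "?Q = ?p ` S" unfolding rl_qcarrier_def ..
  show ?thesis unfolding rl_right_loop_def
  proof (intro conjI ballI)
    show "?p e \<in> ?Q" using Q eS by blast
  next
    fix a b assume "a \<in> ?Q" "b \<in> ?Q"
    then obtain x y where "x \<in> S" "y \<in> S" "a = ?p x" "b = ?p y" using Q by blast
    then show "?o a b \<in> ?Q" using hom cl Q by auto
  next
    fix a assume "a \<in> ?Q"
    then obtain x where x: "x \<in> S" "a = ?p x" using Q by blast
    show "?o (?p e) a = a" "?o a (?p e) = a"
      using hom[OF eS x(1)] hom[OF x(1) eS] x rl_right_loopD(3,4)[OF L] by auto
  next
    fix a b assume "a \<in> ?Q" "b \<in> ?Q"
    then obtain x y where x: "x \<in> S" "a = ?p x" and y: "y \<in> S" "b = ?p y" using Q by blast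
    obtain z where z: "z \<in> S" "op z x = y" using rl_right_div[OF L x(1) y(1)] .
    show "\<exists>!w. w \<in> ?Q \<and> ?o w a = b"
    proof (rule ex1I[of _ "?p z"])
      show "?p z \<in> ?Q \<and> ?o (?p z) a = b" using Q z x y hom by auto
    next
      fix w assume w: "w \<in> ?Q \<and> ?o w a = b"
      then obtain u where u: "u \<in> S" "w = ?p u" using Q by blast
      have "?p (op u x) = ?p (op z x)" using w u hom[OF u(1) x(1)] x y z by simp
      then have "(op u x, op z x) \<in> R"
        using rl_qrep_eq_iff[OF L C cl[OF u(1) x(1)] cl[OF z(1) x(1)]] by simp
      then have "(u, z) \<in> R" using rl_cong_div[OF L C rl_cong_refl[OF C x(1)] _ u(1) z(1)] by blast
      then show "w = ?p z" using rl_qrep_eq_iff[OF L C u(1) z(1)] u by simp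
    qed
  qed
qed

lemma rl_cong_pullback:
  assumes L: "rl_right_loop S op e" and C: "rl_congruence S op e R"
    and C2: "rl_congruence (rl_qcarrier S op (R `` {e})) (rl_qop S op (R `` {e})) (rl_qrep S op (R `` {e}) e) R2"
  shows "rl_congruence S op e
    {(x, y). x \<in> S \<and> y \<in> S \<and> (rl_qrep S op (R `` {e}) x, rl_qrep S op (R `` {e}) y) \<in> R2}"
    (is "rl_congruence S op e ?R")
proof -
  let ?p = "rl_qrep S op (R `` {e})" and ?Q = "rl_qcarrier S op (R `` {e})"
    and ?o = "rl_qop S op (R `` {e})"
  note hom = rl_qrep_hom[OF L C] and cl = rl_right_loopD(2)[OF L]
  have pQ: "?p x \<in> ?Q" if "x \<in> S" for x using that unfolding rl_qcarrier_def by blast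
  show ?thesis
  proof (rule rl_congruenceI[OF L])
    show "equiv S ?R"
    proof (rule equivI)
      show "refl_on S ?R" by (rule refl_onI) (use rl_cong_refl[OF C2 pQ] in blast)
      show "sym ?R" by (rule symI) (use rl_cong_sym[OF C2] in blast)
      show "trans ?R" by (rule transI) (use rl_cong_trans[OF C2] in blast)
    qed blast
    show "(e, e) \<in> ?R" using rl_right_loopD(1)[OF L] rl_cong_refl[OF C2 pQ] by blast
  next
    fix a b c d assume "(a, b) \<in> ?R" "(c, d) \<in> ?R"
    then have H: "a \<in> S" "b \<in> S" "c \<in> S" "d \<in> S" "(?p a, ?p b) \<in> R2" "(?p c, ?p d) \<in> R2" by auto
    have "(?o (?p a) (?p c), ?o (?p b) (?p d)) \<in> R2" using rl_cong_mult[OF C2 H(5,6)] .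
    then show "(op a c, op b d) \<in> ?R" using hom H cl by auto
  next
    fix a b c d x y assume "(a, b) \<in> ?R" "(c, d) \<in> ?R" and x: "x \<in> S" and y: "y \<in> S"
      and xa: "op x a = c" and yb: "op y b = d"
    then have H: "a \<in> S" "b \<in> S" "(?p a, ?p b) \<in> R2" "(?p c, ?p d) \<in> R2" by auto
    have "?o (?p x) (?p a) = ?p c" "?o (?p y) (?p b) = ?p d" using hom x y H xa yb by auto
    then have "(?p x, ?p y) \<in> R2"
      using rl_cong_div[OF rl_quotient_right_loop[OF L C] C2 H(3,4) pQ[OF x] pQ[OF y]] by blast
    then show "(x, y) \<in> ?R" using x y by blast
  qed
qed

section \<open>The upper central series\<close>

declare rl_upper_center.simps(2) [simp del]

lemma rl_upper_center_congruence:
  assumes L: "rl_right_loop S op e"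
  shows "\<exists>R. rl_congruence S op e R \<and> rl_upper_center S op e i = R `` {e}"
proof (induction i)
  case 0
  have "Id_on S `` {e} = {e}" using rl_right_loopD(1)[OF L] by blast
  then show ?case using rl_cong_Id[OF L] by (intro exI[of _ "Id_on S"]) simp
next
  case (Suc i)
  then obtain R where C: "rl_congruence S op e R" and Zi: "rl_upper_center S op e i = R `` {e}" by blast
  let ?p = "rl_qrep S op (R `` {e})" and ?Q = "rl_qcarrier S op (R `` {e})"
    and ?o = "rl_qop S op (R `` {e})"
  let ?R2 = "rl_zeta ?Q ?o (?p e)"
  have LQ: "rl_right_loop ?Q ?o (?p e)" using rl_quotient_right_loop[OF L C] .
  have C2: "rl_congruence ?Q ?o (?p e) ?R2" using rl_Zrel_congruence[OF LQ] rl_zeta_eq[OF LQ] by simp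
  have "rl_upper_center S op e (Suc i) = {x \<in> S. ?p x \<in> ?R2 `` {?p e}}"
    using Zi by (simp add: rl_upper_center.simps(2) rl_center_def Let_def)
  also have "\<dots> = {(x, y). x \<in> S \<and> y \<in> S \<and> (?p x, ?p y) \<in> ?R2} `` {e}"
    using rl_right_loopD(1)[OF L] by auto
  finally show ?case using rl_cong_pullback[OF L C C2] by blast
qed

text \<open>An element of Z_(m+1) commutes and associates with everything modulo the
  congruence of Z_m, since its image in S/Z_m lies in the centre Z(S/Z_m).\<close>
lemma rl_upper_center_Suc_central_mod:
  assumes L: "rl_right_loop S op e" and C: "rl_congruence S op e R"
    and Zm: "rl_upper_center S op e m = R `` {e}"
    and x: "x \<in> rl_upper_center S op e (Suc m)" and y: "y \<in> S" and z: "z \<in> S"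
  shows "(op x y, op y x) \<in> R" "(op (op x y) z, op x (op y z)) \<in> R"
proof -
  let ?p = "rl_qrep S op (R `` {e})" and ?Q = "rl_qcarrier S op (R `` {e})"
    and ?o = "rl_qop S op (R `` {e})"
  note hom = rl_qrep_hom[OF L C] and peq = rl_qrep_eq_iff[OF L C] and cl = rl_right_loopD(2)[OF L]
  have xS: "x \<in> S" and xZ: "?p x \<in> rl_Zset ?Q ?o"
    using x Zm rl_center_eq[OF rl_quotient_right_loop[OF L C]]
    by (simp_all add: rl_upper_center.simps(2) Let_def)
  have pQ: "?p u \<in> ?Q" if "u \<in> S" for u using that unfolding rl_qcarrier_def by blast
  have "?o (?p x) (?p y) = ?o (?p y) (?p x)" using rl_ZsetD(2)[OF xZ pQ[OF y] pQ[OF y]] .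
  then have "?p (op x y) = ?p (op y x)" using hom xS y by simp
  then show "(op x y, op y x) \<in> R" using peq cl xS y by simp
  have "?o (?o (?p x) (?p y)) (?p z) = ?o (?p x) (?o (?p y) (?p z))"
    using rl_ZsetD(3)[OF xZ pQ[OF y] pQ[OF z]] .
  then have "?p (op (op x y) z) = ?p (op x (op y z))" using hom xS y z cl by simp
  then show "(op (op x y) z, op x (op y z)) \<in> R" using peq cl xS y z by simp
qed

section \<open>Abelian quotients and the derived subloop\<close>

definition rl_abelian_mod :: "'a set \<Rightarrow> ('a \<Rightarrow> 'a \<Rightarrow> 'a) \<Rightarrow> 'a rel \<Rightarrow> bool" where
  "rl_abelian_mod S op R \<longleftrightarrow>
     (\<forall>x\<in>S. \<forall>y\<in>S. \<forall>z\<in>S. (op x y, op y x) \<in> R \<and> (op (op x y) z, op x (op y z)) \<in> R)"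

text \<open>S/T is an abelian group iff S is commutative and associative modulo the congruence
  of T: the quotient is already a right loop, so inverses come for free.\<close>
lemma rl_quotient_abelian_iff:
  assumes L: "rl_right_loop S op e" and C: "rl_congruence S op e R"
  shows "rl_quotient_abelian S op e (R `` {e}) \<longleftrightarrow> rl_abelian_mod S op R"
proof -
  let ?p = "rl_qrep S op (R `` {e})" and ?Q = "rl_qcarrier S op (R `` {e})"
    and ?o = "rl_qop S op (R `` {e})"
  let ?G = "\<lparr>carrier = ?Q, mult = ?o, one = ?p e\<rparr>"
  have LQ: "rl_right_loop ?Q ?o (?p e)" using rl_quotient_right_loop[OF L C] .
  note hom = rl_qrep_hom[OF L C] and peq = rl_qrep_eq_iff[OF L C] and cl = rl_right_loopD(2)[OF L]
  have Q: "?Q = ?p ` S" unfolding rl_qcarrier_def ..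
  text \<open>Both laws transfer along the surjective homomorphism ?p.\<close>
  have comm_iff: "?o (?p x) (?p y) = ?o (?p y) (?p x) \<longleftrightarrow> (op x y, op y x) \<in> R"
    if "x \<in> S" "y \<in> S" for x y using hom peq cl that by simp
  have assoc_iff: "?o (?o (?p x) (?p y)) (?p z) = ?o (?p x) (?o (?p y) (?p z)) \<longleftrightarrow>
      (op (op x y) z, op x (op y z)) \<in> R" if "x \<in> S" "y \<in> S" "z \<in> S" for x y z
    using hom peq cl that by simp
  show ?thesis unfolding rl_quotient_abelian_def
  proof
    assume "comm_group ?G"
    then interpret G: comm_group ?G .
    show "rl_abelian_mod S op R" unfolding rl_abelian_mod_def
      using comm_iff assoc_iff G.m_comm G.m_assoc Q by auto
  next
    assume ab: "rl_abelian_mod S op R"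
    show "comm_group ?G"
    proof (rule comm_groupI)
      show "\<one>\<^bsub>?G\<^esub> \<in> carrier ?G" using rl_right_loopD(1)[OF LQ] by simp
      show "a \<otimes>\<^bsub>?G\<^esub> b \<in> carrier ?G" if "a \<in> carrier ?G" "b \<in> carrier ?G" for a b
        using rl_right_loopD(2)[OF LQ] that by simp
      show "a \<otimes>\<^bsub>?G\<^esub> b \<otimes>\<^bsub>?G\<^esub> c = a \<otimes>\<^bsub>?G\<^esub> (b \<otimes>\<^bsub>?G\<^esub> c)"
        if "a \<in> carrier ?G" "b \<in> carrier ?G" "c \<in> carrier ?G" for a b c
        using that ab assoc_iff Q unfolding rl_abelian_mod_def by auto
      show "a \<otimes>\<^bsub>?G\<^esub> b = b \<otimes>\<^bsub>?G\<^esub> a" if "a \<in> carrier ?G" "b \<in> carrier ?G" for a b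
        using that ab comm_iff Q unfolding rl_abelian_mod_def by auto
      show "\<one>\<^bsub>?G\<^esub> \<otimes>\<^bsub>?G\<^esub> a = a" if "a \<in> carrier ?G" for a
        using rl_right_loopD(3)[OF LQ] that by simp
      show "\<exists>b\<in>carrier ?G. b \<otimes>\<^bsub>?G\<^esub> a = \<one>\<^bsub>?G\<^esub>" if "a \<in> carrier ?G" for a
      proof -
        have "a \<in> ?Q" using that by simp
        then obtain b where "b \<in> ?Q" "?o b a = ?p e" by (rule rl_right_div[OF LQ _ rl_right_loopD(1)[OF LQ]])
        then show ?thesis by auto
      qed
    qed
  qed
qed

text \<open>S^(1) exists: it is the identity class of the intersection of all congruences
  modulo which S is commutative and associative.\<close>
lemma rl_derived_least:
  assumes L: "rl_right_loop S op e"
  shows "rl_invariant S op e (rl_derived S op e)" "rl_quotient_abelian S op e (rl_derived S op e)"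
    "\<And>N. rl_invariant S op e N \<Longrightarrow> rl_quotient_abelian S op e N \<Longrightarrow> rl_derived S op e \<subseteq> N"
proof -
  define Rs where "Rs = {R. rl_congruence S op e R \<and> rl_abelian_mod S op R}"
  define R0 where "R0 = (S \<times> S) \<inter> \<Inter>Rs"
  have C0: "rl_congruence S op e R0" unfolding R0_def by (rule rl_cong_Inter[OF L]) (simp add: Rs_def)
  have "rl_abelian_mod S op R0"
    unfolding rl_abelian_mod_def
  proof (intro ballI)
    fix x y z assume "x \<in> S" "y \<in> S" "z \<in> S"
    then show "(op x y, op y x) \<in> R0 \<and> (op (op x y) z, op x (op y z)) \<in> R0"
      using rl_right_loopD(2)[OF L] unfolding R0_def Rs_def rl_abelian_mod_def by auto
  qed
  then have ab0: "rl_quotient_abelian S op e (R0 `` {e})" using rl_quotient_abelian_iff[OF L C0] by simp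
  have inv0: "rl_invariant S op e (R0 `` {e})" using C0 unfolding rl_invariant_def by blast
  have min0: "R0 `` {e} \<subseteq> N" if inv: "rl_invariant S op e N" and ab: "rl_quotient_abelian S op e N" for N
  proof -
    obtain R where R: "rl_congruence S op e R" "N = R `` {e}" using inv unfolding rl_invariant_def by blast
    then have "R \<in> Rs" using ab rl_quotient_abelian_iff[OF L] unfolding Rs_def by simp
    then show ?thesis using R(2) unfolding R0_def by blast
  qed
  have "rl_derived S op e = R0 `` {e}"
    unfolding rl_derived_def
  proof (rule the_equality)
    fix N assume "rl_invariant S op e N \<and> rl_quotient_abelian S op e N \<and>
      (\<forall>N'. rl_invariant S op e N' \<and> rl_quotient_abelian S op e N' \<longrightarrow> N \<subseteq> N')"
    then show "N = R0 `` {e}" using inv0 ab0 min0[of N] by (intro subset_antisym) auto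
  qed (use inv0 ab0 min0 in blast)
  then show "rl_invariant S op e (rl_derived S op e)" "rl_quotient_abelian S op e (rl_derived S op e)"
    "\<And>N. rl_invariant S op e N \<Longrightarrow> rl_quotient_abelian S op e N \<Longrightarrow> rl_derived S op e \<subseteq> N"
    using inv0 ab0 min0 by simp_all
qed

lemma rl_derived_right_loop:
  assumes L: "rl_right_loop S op e"
  shows "rl_right_loop (rl_derived S op e) op e"
proof -
  obtain R where "rl_congruence S op e R" "rl_derived S op e = R `` {e}"
    using rl_derived_least(1)[OF L] unfolding rl_invariant_def by blast
  then show ?thesis using rl_cong_class_right_loop[OF L] by simp
qed

text \<open>The key step: the derived subloop of a right subloop A of Z_(m+1) lies in Z_m,
  because A is commutative and associative modulo the congruence of Z_m.\<close>
lemma rl_derived_le_upper_center: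
  assumes L: "rl_right_loop S op e" and LA: "rl_right_loop A op e"
    and A: "A \<subseteq> rl_upper_center S op e (Suc m)"
  shows "rl_derived A op e \<subseteq> rl_upper_center S op e m"
proof -
  obtain R where C: "rl_congruence S op e R" and Zm: "rl_upper_center S op e m = R `` {e}"
    using rl_upper_center_congruence[OF L] by blast
  have "rl_upper_center S op e (Suc m) \<subseteq> S" by (simp add: rl_upper_center.simps(2) Let_def)
  then have AS: "A \<subseteq> S" using A by blast
  let ?RA = "R \<inter> A \<times> A"
  have CA: "rl_congruence A op e ?RA" using rl_cong_restrict[OF L LA AS C] .
  have "rl_abelian_mod A op ?RA"
    unfolding rl_abelian_mod_def
  proof (intro ballI)
    fix x y z assume x: "x \<in> A" and y: "y \<in> A" and z: "z \<in> A"
    note cl = rl_right_loopD(2)[OF LA]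
    have "(op x y, op y x) \<in> R" "(op (op x y) z, op x (op y z)) \<in> R"
      using rl_upper_center_Suc_central_mod[OF L C Zm subsetD[OF A x] subsetD[OF AS y] subsetD[OF AS z]]
      by simp_all
    then show "(op x y, op y x) \<in> ?RA \<and> (op (op x y) z, op x (op y z)) \<in> ?RA"
      using cl[OF x y] cl[OF y x] cl[OF cl[OF x y] z] cl[OF x cl[OF y z]] by simp
  qed
  then have "rl_quotient_abelian A op e (?RA `` {e})" using rl_quotient_abelian_iff[OF LA CA] by simp
  moreover have "rl_invariant A op e (?RA `` {e})" using CA unfolding rl_invariant_def by blast
  ultimately have "rl_derived A op e \<subseteq> ?RA `` {e}" using rl_derived_least(3)[OF LA] by blast
  then show ?thesis using Zm by blast
qed

lemma rl_derived_series_right_loop: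
  assumes L: "rl_right_loop S op e"
  shows "rl_right_loop (rl_derived_series S op e k) op e"
  by (induction k) (simp_all add: L rl_derived_right_loop)

lemma rl_derived_series_le_upper_center:
  assumes L: "rl_right_loop S op e" and n: "rl_upper_center S op e n = S" and "k \<le> n"
  shows "rl_derived_series S op e k \<subseteq> rl_upper_center S op e (n - k)"
  using \<open>k \<le> n\<close>
proof (induction k)
  case 0
  then show ?case using n by simp
next
  case (Suc k)
  then have "rl_derived_series S op e k \<subseteq> rl_upper_center S op e (Suc (n - Suc k))"
    by (simp add: Suc_diff_Suc)
  then show ?case
    using rl_derived_le_upper_center[OF L rl_derived_series_right_loop[OF L]] by simp
qed

theorem mainTheorem11:
  fixes S :: "'a set" and op :: "'a \<Rightarrow> 'a \<Rightarrow> 'a" and e :: 'a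
  assumes "rl_right_loop S op e"
    and "rl_nilpotent S op e"
  shows "rl_solvable S op e"
proof -
  note L = assms(1)
  obtain n where n: "rl_upper_center S op e n = S" using assms(2) unfolding rl_nilpotent_def by blast
  have "rl_derived_series S op e n \<subseteq> {e}"
    using rl_derived_series_le_upper_center[OF L n order_refl] by simp
  moreover have "e \<in> rl_derived_series S op e n"
    using rl_right_loopD(1)[OF rl_derived_series_right_loop[OF L]] .
  ultimately show ?thesis unfolding rl_solvable_def by blast
qed

end
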